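(* Consider the LPP model where $(x_k(0))_{k\in\mathbb{Z}}$ are integers with $x_{k+1}(0)<x_k(0)$ for all $k$, $x_0(0)=1$, $x_1(0)<-1$, and $\omega_{i,j}$ are independent exponential random variables with rate $v_j>0$. Let $\phi_n=(I_n,J_n)$ be its competition interface. Let $n,M\in\mathbb{N}$ with $M\le n-1$. Then $$\mathbb{P}\big((M,n-M)\in\Gamma_-^\infty\big)\le\mathbb{P}\big(I_n-J_n\le -n+2M\big)\le\mathbb{P}\big((M+1,n-M-1)\in\Gamma_-^\infty\big).$$
   Context: LPP: for independent nonnegative $\{\omega_{i,j}\}$, an up-right path is a sequence of points of $\mathbb{Z}^2$ with increments in $\{(1,0),(0,1)\}$; $L_{S_A\to S_E}=\max_\pi\sum_{(i,j)\in\pi\setminus S_A}\omega_{i,j}$ over up-right paths starting in $S_A$ and ending in $S_E$ ($-\infty$ if none). $\mathcal{L}^+=\{(k+x_k(0),k):k>0\}$, $\mathcal{L}^-=\{(k+x_k(0),k):k\le0\}$. $\Gamma_+^\infty=\{(i,j):L_{\mathcal{L}^+\to(i,j)}>L_{\mathcal{L}^-\to(i,j)}\}$, $\Gamma_-^\infty=\{(i,j):L_{\mathcal{L}^-\to(i,j)}>L_{\mathcal{L}^+\to(i,j)}\}$. Competition interface: $\phi_0=(0,0)$, $\phi_{n+1}=\phi_n+(1,0)$ if $\phi_n+(1,1)\in\Gamma_+^\infty$, $\phi_{n+1}=\phi_n+(0,1)$ if $\phi_n+(1,1)\in\Gamma_-^\infty$, and $\phi_n=(I_n,J_n)$. *)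

theory Defs
  imports "HOL-Probability.Probability"
begin

type_synonym pt = "int \<times> int"

definition up_right_path :: "pt list \<Rightarrow> bool" where
  "up_right_path p \<longleftrightarrow> p \<noteq> [] \<and>
     (\<forall>i. Suc i < length p \<longrightarrow>
        p ! Suc i = (fst (p ! i) + 1, snd (p ! i)) \<or> p ! Suc i = (fst (p ! i), snd (p ! i) + 1))"

text \<open>Last passage value L from S_A to S_E for a weight configuration w
  (supremum in the extended reals; the supremum of the empty set is minus infinity).\<close>
definition LPP :: "(pt \<Rightarrow> real) \<Rightarrow> pt set \<Rightarrow> pt set \<Rightarrow> ereal" where
  "LPP w SA SE = (SUP p \<in> {p. up_right_path p \<and> hd p \<in> SA \<and> last p \<in> SE}.
                     ereal (\<Sum>q \<in> set p - SA. w q))"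

definition Lplus :: "(int \<Rightarrow> int) \<Rightarrow> pt set" where
  "Lplus x = {(k + x k, k) | k. k > 0}"

definition Lminus :: "(int \<Rightarrow> int) \<Rightarrow> pt set" where
  "Lminus x = {(k + x k, k) | k. k \<le> 0}"

definition Gamma_plus :: "(int \<Rightarrow> int) \<Rightarrow> (pt \<Rightarrow> real) \<Rightarrow> pt set" where
  "Gamma_plus x w = {q. LPP w (Lplus x) {q} > LPP w (Lminus x) {q}}"

definition Gamma_minus :: "(int \<Rightarrow> int) \<Rightarrow> (pt \<Rightarrow> real) \<Rightarrow> pt set" where
  "Gamma_minus x w = {q. LPP w (Lminus x) {q} > LPP w (Lplus x) {q}}"

text \<open>Competition interface. If phi n + (1,1) lies in neither Gamma set (a tie, which
  the informal definition leaves undefined), we conventionally step by (0,1).\<close>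
primrec comp_interface :: "(int \<Rightarrow> int) \<Rightarrow> (pt \<Rightarrow> real) \<Rightarrow> nat \<Rightarrow> pt" where
  "comp_interface x w 0 = (0, 0)"
| "comp_interface x w (Suc n) =
     (let (a, b) = comp_interface x w n in
      if (a + 1, b + 1) \<in> Gamma_plus x w then (a + 1, b)
      else (a, b + 1))"

end

theory Submission
  imports Defs
begin

text \<open>
  Off their starting sets both last-passage times satisfy
  \<open>L(q) = \<omega>(q) + max (L(q - (1,0))) (L(q - (0,1)))\<close>, so a weak comparison between
  \<open>L\<^sup>+\<close> and \<open>L\<^sup>-\<close> at both predecessors of a point persists at the point.
  Starting from \<open>L\<^sup>- = -\<infinity>\<close> left of the column \<open>i = 1\<close> and \<open>L\<^sup>+ = -\<infinity>\<close> below
  the row \<open>j = 1\<close>, induction on \<open>n\<close> shows that the competition interface splits the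
  antidiagonal \<open>i + j = n + 1\<close>: points with \<open>i \<le> I\<^sub>n\<close> weakly favour \<open>L\<^sup>+\<close>, points with
  \<open>i > I\<^sub>n\<close> weakly favour \<open>L\<^sup>-\<close>. As \<open>I\<^sub>n + J\<^sub>n = n\<close>, this gives
  \<open>(M, n - M) \<in> \<Gamma>\<^sub>- \<Longrightarrow> I\<^sub>n \<le> M\<close> and \<open>I\<^sub>n \<le> M \<Longrightarrow> L\<^sup>+ \<le> L\<^sup>-\<close> at \<open>(M + 1, n - M - 1)\<close>,
  hence the two inequalities, the second up to a tie \<open>L\<^sup>+ = L\<^sup>-\<close>.

  Ties have probability zero. \<open>L\<^sup>-\<close> only depends on the weights in the half plane
  \<open>i \<ge> 1\<close>; unrolling the recursion of \<open>L\<^sup>+\<close> down to the column \<open>i = 0\<close> turns a tie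
  into the event that a single weight \<open>\<omega>(0, j)\<close> equals a function of the other weights,
  which is independent of it, and that weight has a density.
\<close>

definition depends_only_on :: "(('i \<Rightarrow> 'b) \<Rightarrow> 'c) \<Rightarrow> 'i set \<Rightarrow> bool" where
  "depends_only_on f S \<longleftrightarrow> (\<forall>w w'. (\<forall>i\<in>S. w i = w' i) \<longrightarrow> f w = f w')"

definition up_right_step :: "pt \<Rightarrow> pt \<Rightarrow> bool" where
  "up_right_step a b \<longleftrightarrow> b = (fst a + 1, snd a) \<or> b = (fst a, snd a + 1)"

lemma depends_only_on_mono: "depends_only_on f S \<Longrightarrow> S \<subseteq> T \<Longrightarrow> depends_only_on f T"
  unfolding depends_only_on_def by blast

lemma depends_only_on_coordinate: "i \<in> S \<Longrightarrow> depends_only_on (\<lambda>w. w i) S"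
  unfolding depends_only_on_def by blast

lemma depends_only_on_comp: "depends_only_on f S \<Longrightarrow> depends_only_on (\<lambda>w. h (f w)) S"
  unfolding depends_only_on_def by metis

lemma depends_only_on_comp2:
  "depends_only_on f S \<Longrightarrow> depends_only_on g S \<Longrightarrow> depends_only_on (\<lambda>w. h (f w) (g w)) S"
  unfolding depends_only_on_def by metis

lemma up_right_step_iff_pred:
  "up_right_step a b \<longleftrightarrow> a = (fst b - 1, snd b) \<or> a = (fst b, snd b - 1)"
  by (cases a; cases b) (auto simp: up_right_step_def)

lemma up_right_step_le: "up_right_step a b \<Longrightarrow> a \<le> b"
  by (auto simp: up_right_step_def less_eq_prod_def)

lemma up_right_step_not_ge: "up_right_step a b \<Longrightarrow> \<not> b \<le> a"
  by (auto simp: up_right_step_def less_eq_prod_def)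

lemma up_right_path_iff: "up_right_path p \<longleftrightarrow> p \<noteq> [] \<and> successively up_right_step p"
  unfolding up_right_path_def up_right_step_def successively_conv_nth ..

lemma up_right_path_snoc:
  "p \<noteq> [] \<Longrightarrow> up_right_path (p @ [q]) \<longleftrightarrow> up_right_path p \<and> up_right_step (last p) q"
  by (auto simp: up_right_path_iff successively_append_iff)

lemma up_right_path_sorted: "up_right_path p \<Longrightarrow> sorted_wrt (\<le>) p"
  unfolding up_right_path_iff
  by (metis successively_mono up_right_step_le successively_conv_sorted_wrt transp_on_le)

lemma up_right_path_hd_le: "up_right_path p \<Longrightarrow> q \<in> set p \<Longrightarrow> hd p \<le> q"
  using up_right_path_sorted[of p] by (cases p) auto

lemma up_right_path_le_last:
  assumes "up_right_path p" "q \<in> set p"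
  shows "q \<le> last p"
proof -
  have p: "p = butlast p @ [last p]" using assms(1) by (simp add: up_right_path_iff)
  with up_right_path_sorted[OF assms(1)] have "\<forall>r\<in>set (butlast p). r \<le> last p"
    by (metis sorted_wrt_append list.set_intros(1))
  moreover have "q \<in> set (butlast p @ [last p])" using assms(2) p by simp
  ultimately show ?thesis by auto
qed

lemma up_right_path_exists:
  assumes "s \<le> q"
  shows "\<exists>p. up_right_path p \<and> hd p = s \<and> last p = q"
  using assms
proof (induction "nat (fst q - fst s + snd q - snd s)" arbitrary: q)
  case 0
  then have "q = s" by (cases q; cases s) (auto simp: less_eq_prod_def)
  then show ?case by (intro exI[of _ "[s]"]) (simp add: up_right_path_iff)
next
  case (Suc d)
  obtain q' where q': "up_right_step q' q" "s \<le> q'"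
  proof (cases "fst s < fst q")
    case True
    with Suc.prems show ?thesis by (intro that[of "(fst q - 1, snd q)"]) (auto simp: up_right_step_def less_eq_prod_def)
  next
    case False
    with Suc.hyps(2) Suc.prems show ?thesis
      by (intro that[of "(fst q, snd q - 1)"]) (auto simp: up_right_step_def less_eq_prod_def)
  qed
  with Suc.hyps(2) obtain p where p: "up_right_path p" "hd p = s" "last p = q'"
    using Suc.hyps(1)[of q'] by (force simp: up_right_step_def)
  then have "p \<noteq> []" by (simp add: up_right_path_iff)
  with p q'(1) have "up_right_path (p @ [q])" "hd (p @ [q]) = s"
    by (simp_all add: up_right_path_snoc)
  then show ?case by auto
qed

definition paths_to :: "pt set \<Rightarrow> pt \<Rightarrow> pt list set" where
  "paths_to SA q = {p. up_right_path p \<and> hd p \<in> SA \<and> last p = q}"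

definition path_weight :: "(pt \<Rightarrow> real) \<Rightarrow> pt set \<Rightarrow> pt list \<Rightarrow> real" where
  "path_weight w SA p = (\<Sum>r \<in> set p - SA. w r)"

lemma LPP_singleton: "LPP w SA {q} = (SUP p \<in> paths_to SA q. ereal (path_weight w SA p))"
  unfolding LPP_def paths_to_def path_weight_def by simp

lemma path_weight_le_LPP: "p \<in> paths_to SA q \<Longrightarrow> ereal (path_weight w SA p) \<le> LPP w SA {q}"
  unfolding LPP_singleton by (rule SUP_upper)

lemma LPP_eq_minf_iff: "LPP w SA {q} = -\<infinity> \<longleftrightarrow> (\<forall>s\<in>SA. \<not> s \<le> q)"
proof
  assume "LPP w SA {q} = -\<infinity>"
  show "\<forall>s\<in>SA. \<not> s \<le> q"
  proof (intro ballI notI)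
    fix s assume "s \<in> SA" "s \<le> q"
    then obtain p where "p \<in> paths_to SA q"
      using up_right_path_exists[of s q] by (auto simp: paths_to_def)
    from path_weight_le_LPP[OF this, of w] \<open>LPP w SA {q} = -\<infinity>\<close> show False by simp
  qed
next
  assume "\<forall>s\<in>SA. \<not> s \<le> q"
  moreover have "hd p \<le> q" if "p \<in> paths_to SA q" for p
    using that up_right_path_hd_le[of p "last p"] by (auto simp: paths_to_def up_right_path_iff)
  ultimately have "paths_to SA q = {}"
    by (auto simp: paths_to_def)
  then show "LPP w SA {q} = -\<infinity>" by (simp add: LPP_singleton bot_ereal_def)
qed

lemma depends_only_on_LPP: "depends_only_on (\<lambda>w. LPP w SA {q}) {r. (\<exists>s\<in>SA. s \<le> r) \<and> r \<le> q}"
  unfolding depends_only_on_def LPP_singleton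
proof (intro allI impI SUP_cong refl arg_cong[where f=ereal])
  fix w w' :: "pt \<Rightarrow> real" and p
  assume agree: "\<forall>r\<in>{r. (\<exists>s\<in>SA. s \<le> r) \<and> r \<le> q}. w r = w' r" and "p \<in> paths_to SA q"
  then have p: "up_right_path p" "hd p \<in> SA" "last p = q" by (auto simp: paths_to_def)
  show "path_weight w SA p = path_weight w' SA p"
    unfolding path_weight_def
    by (rule sum.cong) (use p up_right_path_hd_le up_right_path_le_last agree in blast)+
qed

lemma borel_measurable_LPP:
  assumes "\<And>q. (\<lambda>y. g q y) \<in> borel_measurable N"
  shows "(\<lambda>y. LPP (\<lambda>q. g q y) SA {p}) \<in> borel_measurable N"
  unfolding LPP_singleton
  by (rule borel_measurable_SUP)
     (auto simp: path_weight_def intro!: borel_measurable_ereal borel_measurable_sum assms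
       countable_subset[OF subset_UNIV])

lemma borel_measurable_LPP_PiM: "(\<lambda>w. LPP w SA {q}) \<in> borel_measurable (Pi\<^sub>M UNIV (\<lambda>_. borel))"
  by (intro borel_measurable_LPP measurable_component_singleton) simp

lemma path_weight_snoc:
  assumes "up_right_path p" "up_right_step (last p) q" "q \<notin> SA"
  shows "path_weight w SA (p @ [q]) = w q + path_weight w SA p"
proof -
  have "q \<notin> set p"
    using up_right_path_le_last[OF assms(1)] up_right_step_not_ge[OF assms(2)] by blast
  with assms(3) show ?thesis by (simp add: path_weight_def insert_Diff_if)
qed

lemma paths_to_snoc:
  assumes "q \<notin> SA"
  shows "paths_to SA q =
    (\<lambda>p. p @ [q]) ` (paths_to SA (fst q - 1, snd q) \<union> paths_to SA (fst q, snd q - 1))"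
proof (intro equalityI subsetI)
  fix p assume "p \<in> paths_to SA q"
  then have p: "up_right_path p" "hd p \<in> SA" "last p = q" by (auto simp: paths_to_def)
  define p' where "p' = butlast p"
  have p_eq: "p = p' @ [q]" unfolding p'_def by (metis p append_butlast_last_id up_right_path_iff)
  have "p' \<noteq> []"
  proof
    assume "p' = []"
    with p_eq p(2) assms show False by simp
  qed
  with p p_eq have "up_right_path p'" "up_right_step (last p') q" "hd p' \<in> SA"
    using up_right_path_snoc[of p' q] by auto
  then show "p \<in> (\<lambda>p. p @ [q]) ` (paths_to SA (fst q - 1, snd q) \<union> paths_to SA (fst q, snd q - 1))"
    unfolding p_eq by (intro imageI) (auto simp: paths_to_def up_right_step_iff_pred)
next
  fix p assume "p \<in> (\<lambda>p. p @ [q]) ` (paths_to SA (fst q - 1, snd q) \<union> paths_to SA (fst q, snd q - 1))"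
  then obtain p' where p': "p = p' @ [q]" "up_right_path p'" "hd p' \<in> SA" "up_right_step (last p') q"
    by (auto simp: paths_to_def up_right_step_iff_pred)
  then have "p' \<noteq> []" by (simp add: up_right_path_iff)
  with p' show "p \<in> paths_to SA q" by (simp add: paths_to_def up_right_path_snoc)
qed

lemma SUP_ereal_add_real: "(SUP i\<in>I. ereal c + f i) = ereal c + (SUP i\<in>I. f i)"
  by (cases "I = {}") (simp_all add: SUP_ereal_add_right bot_ereal_def)

lemma LPP_recursion:
  assumes "q \<notin> SA"
  shows "LPP w SA {q} =
    ereal (w q) + max (LPP w SA {(fst q - 1, snd q)}) (LPP w SA {(fst q, snd q - 1)})"
proof -
  let ?P = "paths_to SA (fst q - 1, snd q) \<union> paths_to SA (fst q, snd q - 1)"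
  have "LPP w SA {q} = (SUP p \<in> ?P. ereal (path_weight w SA (p @ [q])))"
    unfolding LPP_singleton paths_to_snoc[OF assms] image_image ..
  also have "\<dots> = (SUP p \<in> ?P. ereal (w q) + ereal (path_weight w SA p))"
    using assms
    by (intro SUP_cong refl)
       (auto simp: paths_to_def up_right_step_iff_pred path_weight_snoc)
  also have "\<dots> = ereal (w q) + max (LPP w SA {(fst q - 1, snd q)}) (LPP w SA {(fst q, snd q - 1)})"
    unfolding SUP_ereal_add_real SUP_union LPP_singleton sup_max ..
  finally show ?thesis .
qed

lemma LPP_recursion_eq_ereal:
  assumes "q \<notin> SA" "LPP w SA {q} = ereal c"
  shows "max (LPP w SA {(fst q - 1, snd q)}) (LPP w SA {(fst q, snd q - 1)}) = ereal (c - w q)"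
  using assms LPP_recursion[OF assms(1), of w]
  by (cases "max (LPP w SA {(fst q - 1, snd q)}) (LPP w SA {(fst q, snd q - 1)})") auto

lemma sets_Gamma_plus_event:
  assumes "\<And>q. W q \<in> borel_measurable M"
  shows "{\<omega> \<in> space M. c \<in> Gamma_plus x (\<lambda>q. W q \<omega>)} \<in> sets M"
  unfolding Gamma_plus_def mem_Collect_eq
  by (intro borel_measurable_less borel_measurable_LPP assms)

lemma sets_Gamma_minus_event:
  assumes "\<And>q. W q \<in> borel_measurable M"
  shows "{\<omega> \<in> space M. c \<in> Gamma_minus x (\<lambda>q. W q \<omega>)} \<in> sets M"
  unfolding Gamma_minus_def mem_Collect_eq
  by (intro borel_measurable_less borel_measurable_LPP assms)

lemma measurable_comp_interface:
  assumes "\<And>q. W q \<in> borel_measurable M"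
  shows "(\<lambda>\<omega>. comp_interface x (\<lambda>q. W q \<omega>) n) \<in> measurable M (count_space UNIV)"
proof (induction n)
  case (Suc n)
  have "(\<lambda>\<omega>. comp_interface x (\<lambda>q. W q \<omega>) (Suc n)) =
    (\<lambda>\<omega>. (\<lambda>c \<omega>. if (fst c + 1, snd c + 1) \<in> Gamma_plus x (\<lambda>q. W q \<omega>)
       then (fst c + 1, snd c) else (fst c, snd c + 1)) (comp_interface x (\<lambda>q. W q \<omega>) n) \<omega>)"
    by (simp add: Let_def split_beta)
  also have "\<dots> \<in> measurable M (count_space UNIV)"
    by (rule measurable_compose_countable'[OF _ Suc.IH])
       (auto intro!: measurable_If sets_Gamma_plus_event assms)
  finally show ?case .
qed simp

lemma sets_comp_interface_event:
  assumes "\<And>q. W q \<in> borel_measurable M"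
  shows "{\<omega> \<in> space M. P (comp_interface x (\<lambda>q. W q \<omega>) n)} \<in> sets M"
  using measurable_sets[OF measurable_comp_interface[OF assms, where x=x and n=n], of "{c. P c}"]
  by (simp add: vimage_def Int_def conj_commute)

lemma distributed_lborel_atomless:
  assumes "distributed M lborel X f"
  shows "emeasure M {\<omega> \<in> space M. X \<omega> = c} = 0"
proof -
  have "{\<omega> \<in> space M. X \<omega> = c} = X -` {c} \<inter> space M" by auto
  also have "emeasure M \<dots> = emeasure (distr M lborel X) {c}"
    using distributed_measurable[OF assms] by (simp add: emeasure_distr)
  also have "\<dots> = emeasure (density lborel f) {c}"
    by (simp add: distributed_distr_eq_density[OF assms])
  also have "\<dots> = 0"
  proof -
    have "AE t in lborel. t \<noteq> c"
      by (rule AE_I'[where N="{c}"]) (auto intro: finite_imp_null_set_lborel)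
    then have "AE t in lborel. f t * indicator {c} t = 0" by eventually_elim simp
    then show ?thesis
      using distributed_borel_measurable[OF assms] by (simp add: emeasure_density nn_integral_0_iff_AE)
  qed
  finally show ?thesis .
qed

lemma (in prob_space) indep_var_AE_neq:
  fixes X Y :: "'a \<Rightarrow> real"
  assumes ind: "indep_var borel X borel Y"
    and atomless: "\<And>c. emeasure M {\<omega> \<in> space M. Y \<omega> = c} = 0"
  shows "AE \<omega> in M. X \<omega> \<noteq> Y \<omega>"
proof -
  have X: "X \<in> borel_measurable M" and Y: "Y \<in> borel_measurable M"
    and eq: "distr M borel X \<Otimes>\<^sub>M distr M borel Y = distr M (borel \<Otimes>\<^sub>M borel) (\<lambda>x. (X x, Y x))"
    using ind unfolding indep_var_distribution_eq by auto
  define D where "D = {p :: real \<times> real. fst p = snd p}"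
  have "closed D" unfolding D_def by (intro closed_Collect_eq continuous_intros)
  then have D: "D \<in> sets (borel \<Otimes>\<^sub>M borel)" unfolding borel_prod by simp
  interpret Y: prob_space "distr M borel Y" by (rule prob_space_distr[OF Y])
  have "emeasure M {\<omega> \<in> space M. X \<omega> = Y \<omega>} = emeasure M ((\<lambda>x. (X x, Y x)) -` D \<inter> space M)"
    by (rule arg_cong[where f="emeasure M"]) (auto simp: D_def)
  also have "\<dots> = emeasure (distr M borel X \<Otimes>\<^sub>M distr M borel Y) D"
    using X Y D by (simp add: eq emeasure_distr)
  also have "\<dots> = (\<integral>\<^sup>+t. emeasure (distr M borel Y) (Pair t -` D) \<partial>distr M borel X)"
    using D by (intro Y.emeasure_pair_measure_alt) (simp cong: sets_pair_measure_cong)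
  also have "\<dots> = (\<integral>\<^sup>+t. 0 \<partial>distr M borel X)"
  proof (rule nn_integral_cong)
    fix t :: real
    have "Pair t -` D = {t}" by (auto simp: D_def)
    moreover have "Y -` {t} \<inter> space M = {\<omega> \<in> space M. Y \<omega> = t}" by auto
    ultimately show "emeasure (distr M borel Y) (Pair t -` D) = 0"
      using Y atomless by (simp add: emeasure_distr)
  qed
  finally have "emeasure M {\<omega> \<in> space M. X \<omega> = Y \<omega>} = 0" by simp
  moreover have "{\<omega> \<in> space M. X \<omega> = Y \<omega>} \<in> sets M" using X Y by measurable
  ultimately show ?thesis by (subst AE_iff_measurable) auto
qed

lemma (in prob_space) indep_vars_AE_neq_coordinate:
  fixes W :: "'i \<Rightarrow> 'a \<Rightarrow> real"
  assumes ind: "indep_vars (\<lambda>_. borel) W UNIV"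
    and atomless: "\<And>c. emeasure M {\<omega> \<in> space M. W z \<omega> = c} = 0"
    and Z: "Z \<in> borel_measurable (Pi\<^sub>M UNIV (\<lambda>_. borel))" "depends_only_on Z (- {z})"
  shows "AE \<omega> in M. Z (\<lambda>i. W i \<omega>) \<noteq> W z \<omega>"
proof -
  define K where "K = - {z}"
  define ext where "ext g = (\<lambda>i. if i = z then 0 else g i)" for g :: "'i \<Rightarrow> real"
  have "ext \<in> measurable (Pi\<^sub>M K (\<lambda>_. borel)) (Pi\<^sub>M UNIV (\<lambda>_. borel))"
    unfolding ext_def
  proof (rule measurable_PiM_single')
    fix i
    show "(\<lambda>g. if i = z then 0 else g i) \<in> borel_measurable (Pi\<^sub>M K (\<lambda>_. borel))"
      by (cases "i = z") (simp_all add: K_def)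
  qed simp
  then have "indep_var borel (Z \<circ> ext \<circ> (\<lambda>\<omega>. restrict (\<lambda>i. W i \<omega>) K))
      borel ((\<lambda>f. f z) \<circ> (\<lambda>\<omega>. restrict (\<lambda>i. W i \<omega>) {z}))"
    by (intro indep_var_compose[OF indep_var_restrict[OF ind]] measurable_comp[OF _ Z(1)])
       (auto simp: K_def)
  moreover have "Z \<circ> ext \<circ> (\<lambda>\<omega>. restrict (\<lambda>i. W i \<omega>) K) = (\<lambda>\<omega>. Z (\<lambda>i. W i \<omega>))"
    using Z(2) unfolding depends_only_on_def by (auto simp: ext_def K_def)
  moreover have "(\<lambda>f. f z) \<circ> (\<lambda>\<omega>. restrict (\<lambda>i. W i \<omega>) {z}) = W z" by auto
  ultimately show ?thesis using indep_var_AE_neq atomless by simp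
qed

locale staircase =
  fixes x :: "int \<Rightarrow> int"
  assumes x_strict_decr: "\<And>k. x (k + 1) < x k" and x_0: "x 0 = 1" and x_1: "x 1 < -1"
begin

abbreviation Lp :: "(pt \<Rightarrow> real) \<Rightarrow> pt \<Rightarrow> ereal" where
  "Lp w q \<equiv> LPP w (Lplus x) {q}"

abbreviation Lm :: "(pt \<Rightarrow> real) \<Rightarrow> pt \<Rightarrow> ereal" where
  "Lm w q \<equiv> LPP w (Lminus x) {q}"

lemma x_decr_gap: "k \<le> l \<Longrightarrow> x l + (l - k) \<le> x k"
proof (induction l rule: int_ge_induct)
  case (step i)
  then show ?case using x_strict_decr[of i] by simp
qed simp

lemma Lminus_mem: "r \<in> Lminus x \<Longrightarrow> 1 \<le> fst r \<and> snd r \<le> 0"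
proof -
  assume "r \<in> Lminus x"
  then obtain k where "r = (k + x k, k)" "k \<le> 0" by (auto simp: Lminus_def)
  with x_decr_gap[of k 0] x_0 show ?thesis by simp
qed

lemma Lplus_mem: "r \<in> Lplus x \<Longrightarrow> fst r \<le> -1 \<and> 1 \<le> snd r"
proof -
  assume "r \<in> Lplus x"
  then obtain k where "r = (k + x k, k)" "0 < k" by (auto simp: Lplus_def)
  with x_decr_gap[of 1 k] x_1 show ?thesis by simp
qed

lemma Lm_minf: "fst q \<le> 0 \<Longrightarrow> Lm w q = -\<infinity>"
  unfolding LPP_eq_minf_iff using Lminus_mem by (force simp: less_eq_prod_def)

lemma Lp_minf: "snd q \<le> 0 \<Longrightarrow> Lp w q = -\<infinity>"
  unfolding LPP_eq_minf_iff using Lplus_mem by (force simp: less_eq_prod_def)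

lemma Lm_gt_minf:
  assumes "1 \<le> fst q" "0 \<le> snd q"
  shows "-\<infinity> < Lm w q"
proof -
  have "(1, 0) \<in> Lminus x" using x_0 by (force simp: Lminus_def)
  with assms have "\<not> (\<forall>s\<in>Lminus x. \<not> s \<le> q)" by (force simp: less_eq_prod_def)
  then have "Lm w q \<noteq> -\<infinity>" by (simp add: LPP_eq_minf_iff)
  then show ?thesis by simp
qed

lemma Lp_lt_inf: "Lp w q < \<infinity>"
proof -
  define B where "B = {snd q + x (snd q) .. fst q} \<times> {1 .. snd q}"
  have "ereal (path_weight w (Lplus x) p) \<le> ereal (\<Sum>r\<in>B. \<bar>w r\<bar>)" if "p \<in> paths_to (Lplus x) q" for p
  proof -
    from that have p: "up_right_path p" "hd p \<in> Lplus x" "last p = q" by (auto simp: paths_to_def)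
    then obtain k where k: "hd p = (k + x k, k)" "k > 0" by (auto simp: Lplus_def)
    have "set p \<subseteq> B"
    proof
      fix r assume "r \<in> set p"
      then have r: "hd p \<le> r" "r \<le> q"
        using up_right_path_hd_le[OF p(1)] up_right_path_le_last[OF p(1)] p(3) by auto
      have "x (snd q) + (snd q - k) \<le> x k"
        using r k by (intro x_decr_gap) (simp add: less_eq_prod_def)
      with r k show "r \<in> B"
        unfolding B_def less_eq_prod_def by (cases r) simp
    qed
    have "path_weight w (Lplus x) p \<le> (\<Sum>r\<in>set p - Lplus x. \<bar>w r\<bar>)"
      unfolding path_weight_def by (rule sum_mono) simp
    also have "\<dots> \<le> (\<Sum>r\<in>B. \<bar>w r\<bar>)"
      using \<open>set p \<subseteq> B\<close> by (intro sum_mono2) (auto simp: B_def)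
    finally show ?thesis by simp
  qed
  then have "Lp w q \<le> ereal (\<Sum>r\<in>B. \<bar>w r\<bar>)" unfolding LPP_singleton by (rule SUP_least)
  then show ?thesis using order.strict_trans1 by fastforce
qed

lemma Lm_le_Lp_propagate:
  assumes prev: "\<And>i j. i + j = d \<Longrightarrow> i \<le> I \<Longrightarrow> Lm w (i, j) \<le> Lp w (i, j)"
    and "I \<le> d" "i + j = d + 1" "i \<le> I"
  shows "Lm w (i, j) \<le> Lp w (i, j)"
proof (cases "(i, j) \<in> Lplus x")
  case True
  then show ?thesis using Lplus_mem[OF True] Lm_minf[of "(i, j)" w] by simp
next
  case False
  have "(i, j) \<notin> Lminus x" using Lminus_mem[of "(i, j)"] assms(2-4) by auto
  moreover have "max (Lm w (i - 1, j)) (Lm w (i, j - 1)) \<le> max (Lp w (i - 1, j)) (Lp w (i, j - 1))"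
    using assms(3,4) by (intro max.mono prev) auto
  ultimately show ?thesis using LPP_recursion[OF False, of w] LPP_recursion[of "(i, j)" "Lminus x" w]
    by (simp add: add_left_mono)
qed

lemma Lp_le_Lm_propagate:
  assumes prev: "\<And>i j. i + j = d \<Longrightarrow> I < i \<Longrightarrow> Lp w (i, j) \<le> Lm w (i, j)"
    and "0 \<le> I" "i + j = d + 1" "I + 1 < i"
  shows "Lp w (i, j) \<le> Lm w (i, j)"
proof (cases "(i, j) \<in> Lminus x")
  case True
  then show ?thesis using Lminus_mem[OF True] Lp_minf[of "(i, j)" w] by simp
next
  case False
  have "(i, j) \<notin> Lplus x" using Lplus_mem[of "(i, j)"] assms(2-4) by auto
  moreover have "max (Lp w (i - 1, j)) (Lp w (i, j - 1)) \<le> max (Lm w (i - 1, j)) (Lm w (i, j - 1))"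
    using assms(3,4) by (intro max.mono prev) auto
  ultimately show ?thesis using LPP_recursion[OF False, of w] LPP_recursion[of "(i, j)" "Lplus x" w]
    by (simp add: add_left_mono)
qed

lemma comp_interface_Suc:
  "comp_interface x w (Suc n) =
    (if (fst (comp_interface x w n) + 1, snd (comp_interface x w n) + 1) \<in> Gamma_plus x w
     then (fst (comp_interface x w n) + 1, snd (comp_interface x w n))
     else (fst (comp_interface x w n), snd (comp_interface x w n) + 1))"
  by (simp add: Let_def split_beta)

lemma comp_interface_antidiagonal:
  "fst (comp_interface x w n) + snd (comp_interface x w n) = int n
   \<and> 0 \<le> fst (comp_interface x w n) \<and> 0 \<le> snd (comp_interface x w n)"
  by (induction n) (auto simp del: comp_interface.simps(2) simp add: comp_interface_Suc)

lemma fst_comp_interface_Suc: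
  "fst (comp_interface x w n) \<le> fst (comp_interface x w (Suc n))
   \<and> fst (comp_interface x w (Suc n)) \<le> fst (comp_interface x w n) + 1"
  by (simp del: comp_interface.simps(2) add: comp_interface_Suc)

lemma comp_interface_separates:
  "(\<forall>i j. i + j = int n + 1 \<longrightarrow> i \<le> fst (comp_interface x w n)
      \<longrightarrow> Lm w (i, j) \<le> Lp w (i, j))
   \<and> (\<forall>i j. i + j = int n + 1 \<longrightarrow> fst (comp_interface x w n) < i
      \<longrightarrow> Lp w (i, j) \<le> Lm w (i, j))"
proof (induction n)
  case 0
  show ?case by (simp add: Lm_minf Lp_minf)
next
  case (Suc n)
  obtain I J where phi: "comp_interface x w n = (I, J)" by force
  have IJ: "I + J = int n" "0 \<le> I" "0 \<le> J"
    using comp_interface_antidiagonal[of w n] phi by auto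
  have left: "Lm w (i, j) \<le> Lp w (i, j)" if "i + j = int n + 2" "i \<le> I" for i j
    using Lm_le_Lp_propagate[where d="int n + 1" and I=I] Suc.IH phi IJ that by simp
  have right: "Lp w (i, j) \<le> Lm w (i, j)" if "i + j = int n + 2" "I + 1 < i" for i j
    using Lp_le_Lm_propagate[where d="int n + 1" and I=I] Suc.IH phi IJ that by simp
  \<comment> \<open>The one point not reached by propagation is \<open>(I + 1, J + 1)\<close>, and the step of the
    interface is chosen according to the side of \<open>\<Gamma>\<^sub>+\<close> it lies on.\<close>
  have fst_Suc: "fst (comp_interface x w (Suc n))
      = (if (I + 1, J + 1) \<in> Gamma_plus x w then I + 1 else I)"
    using phi by simp
  show ?case
  proof (intro conjI allI impI)
    fix i j assume "i + j = int (Suc n) + 1" "i \<le> fst (comp_interface x w (Suc n))"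
    then consider "i + j = int n + 2" "i \<le> I"
      | "(i, j) = (I + 1, J + 1)" "(I + 1, J + 1) \<in> Gamma_plus x w"
      using IJ unfolding fst_Suc by (cases "i \<le> I") (auto split: if_splits)
    then show "Lm w (i, j) \<le> Lp w (i, j)"
      by cases (use left in \<open>auto simp: Gamma_plus_def\<close>)
  next
    fix i j assume "i + j = int (Suc n) + 1" "fst (comp_interface x w (Suc n)) < i"
    then consider "i + j = int n + 2" "I + 1 < i"
      | "(i, j) = (I + 1, J + 1)" "(I + 1, J + 1) \<notin> Gamma_plus x w"
      using IJ unfolding fst_Suc by (cases "I + 1 < i") (auto split: if_splits)
    then show "Lp w (i, j) \<le> Lm w (i, j)"
      by cases (use right in \<open>auto simp: Gamma_plus_def not_less\<close>)
  qed
qed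

lemma fst_comp_interface_le_if_Gamma_minus:
  assumes "(i, j) \<in> Gamma_minus x w" "i + j = int (Suc n)"
  shows "fst (comp_interface x w (Suc n)) \<le> i"
proof -
  have "i \<le> fst (comp_interface x w n) \<Longrightarrow> Lm w (i, j) \<le> Lp w (i, j)"
    using conjunct1[OF comp_interface_separates[of n w]] assms(2) by simp
  with assms(1) have "fst (comp_interface x w n) < i"
    unfolding Gamma_minus_def by (metis mem_Collect_eq not_le)
  with fst_comp_interface_Suc[of w n] show ?thesis by simp
qed

lemma Lp_le_Lm_if_fst_comp_interface_less:
  assumes "fst (comp_interface x w (Suc n)) < i" "i + j = int (Suc n)"
  shows "Lp w (i, j) \<le> Lm w (i, j)"
proof -
  have "fst (comp_interface x w n) < i"
    using fst_comp_interface_Suc[of w n] assms(1) by simp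
  with conjunct2[OF comp_interface_separates[of n w]] assms(2) show ?thesis by simp
qed

end

locale staircase_lpp = prob_space M + staircase x
  for M :: "'a measure" and x :: "int \<Rightarrow> int" +
  fixes W :: "pt \<Rightarrow> 'a \<Rightarrow> real"
  assumes indep_weights: "indep_vars (\<lambda>_. borel) W UNIV"
    and weights_atomless: "\<And>q c. emeasure M {\<omega> \<in> space M. W q \<omega> = c} = 0"
begin

lemma weights_measurable: "W q \<in> borel_measurable M"
  using indep_weights by (cases q) (simp add: indep_vars_def)

lemma AE_Lp_neq_column:
  assumes "fst p \<le> 0" "p \<notin> Lplus x"
    and c: "c \<in> borel_measurable (Pi\<^sub>M UNIV (\<lambda>_. borel))" "depends_only_on c {q. 1 \<le> fst q}"
  shows "AE \<omega> in M. Lp (\<lambda>q. W q \<omega>) p \<noteq> ereal (c (\<lambda>q. W q \<omega>))"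
proof -
  define Y where "Y w = max (Lp w (fst p - 1, snd p)) (Lp w (fst p, snd p - 1))" for w
  define Z where "Z w = c w - real_of_ereal (Y w)" for w
  have "Z \<in> borel_measurable (Pi\<^sub>M UNIV (\<lambda>_. borel))"
    unfolding Z_def Y_def
    by (intro borel_measurable_diff c borel_measurable_real_of_ereal borel_measurable_max
        borel_measurable_LPP_PiM)
  moreover have "depends_only_on Z (- {p})"
  proof -
    have c_dep: "depends_only_on c (- {p})"
      using c(2) by (rule depends_only_on_mono) (use assms(1) in auto)
    have "depends_only_on (\<lambda>w. Lp w (fst p - 1, snd p)) (- {p})"
      "depends_only_on (\<lambda>w. Lp w (fst p, snd p - 1)) (- {p})"
      by (rule depends_only_on_mono[OF depends_only_on_LPP], auto simp: less_eq_prod_def)+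
    then have "depends_only_on Y (- {p})"
      unfolding Y_def by (rule depends_only_on_comp2)
    with c_dep show ?thesis unfolding Z_def by (rule depends_only_on_comp2)
  qed
  ultimately have "AE \<omega> in M. Z (\<lambda>q. W q \<omega>) \<noteq> W p \<omega>"
    by (intro indep_vars_AE_neq_coordinate indep_weights weights_atomless)
  then show ?thesis
  proof eventually_elim
    case (elim \<omega>)
    show ?case
    proof
      assume "Lp (\<lambda>q. W q \<omega>) p = ereal (c (\<lambda>q. W q \<omega>))"
      from LPP_recursion_eq_ereal[OF assms(2) this] have "Z (\<lambda>q. W q \<omega>) = W p \<omega>"
        by (simp add: Z_def Y_def)
      with elim show False by simp
    qed
  qed
qed

lemma AE_Lp_neq:
  assumes "0 \<le> fst p"
    and "c \<in> borel_measurable (Pi\<^sub>M UNIV (\<lambda>_. borel))" "depends_only_on c {q. 1 \<le> fst q}"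
  shows "AE \<omega> in M. Lp (\<lambda>q. W q \<omega>) p \<noteq> ereal (c (\<lambda>q. W q \<omega>))"
  using assms
proof (induction "nat (fst p + snd p)" arbitrary: p c rule: less_induct)
  case less
  consider "snd p \<le> 0" | "fst p = 0" "0 < snd p" | "1 \<le> fst p" "0 < snd p"
    using less.prems(1) by linarith
  then show ?case
  proof cases
    case 1
    then show ?thesis by (simp add: Lp_minf)
  next
    case 2
    then have "fst p \<le> 0" "p \<notin> Lplus x" using Lplus_mem[of p] by auto
    then show ?thesis using less.prems(2,3) by (rule AE_Lp_neq_column)
  next
    case 3
    then have p: "p \<notin> Lplus x" using Lplus_mem[of p] by auto
    define c' where "c' w = c w - w p" for w
    have "c' \<in> borel_measurable (Pi\<^sub>M UNIV (\<lambda>_. borel))"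
      unfolding c'_def by (intro borel_measurable_diff less.prems(2) measurable_component_singleton) simp
    moreover have "depends_only_on c' {q. 1 \<le> fst q}"
    proof -
      have "depends_only_on (\<lambda>w. w p) {q. 1 \<le> fst q}"
        using 3 by (intro depends_only_on_coordinate) simp
      with less.prems(3) show ?thesis unfolding c'_def by (rule depends_only_on_comp2)
    qed
    ultimately have "AE \<omega> in M. Lp (\<lambda>q. W q \<omega>) (fst p - 1, snd p) \<noteq> ereal (c' (\<lambda>q. W q \<omega>))"
      "AE \<omega> in M. Lp (\<lambda>q. W q \<omega>) (fst p, snd p - 1) \<noteq> ereal (c' (\<lambda>q. W q \<omega>))"
      using 3 by (intro less.hyps; simp)+
    then show ?thesis
    proof eventually_elim
      case (elim \<omega>)
      show ?case
      proof
        assume "Lp (\<lambda>q. W q \<omega>) p = ereal (c (\<lambda>q. W q \<omega>))"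
        from LPP_recursion_eq_ereal[OF p this] elim show False
          by (simp add: c'_def max_def split: if_splits)
      qed
    qed
  qed
qed

lemma AE_Lp_neq_Lm:
  assumes "1 \<le> fst q" "0 \<le> snd q"
  shows "AE \<omega> in M. Lp (\<lambda>r. W r \<omega>) q \<noteq> Lm (\<lambda>r. W r \<omega>) q"
proof -
  have "depends_only_on (\<lambda>w. Lm w q) {r. 1 \<le> fst r}"
    using Lminus_mem
    by (intro depends_only_on_mono[OF depends_only_on_LPP]) (force simp: less_eq_prod_def)
  then have "depends_only_on (\<lambda>w. real_of_ereal (Lm w q)) {r. 1 \<le> fst r}"
    by (rule depends_only_on_comp)
  moreover have "(\<lambda>w. real_of_ereal (Lm w q)) \<in> borel_measurable (Pi\<^sub>M UNIV (\<lambda>_. borel))"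
    by (intro borel_measurable_real_of_ereal borel_measurable_LPP_PiM)
  ultimately have "AE \<omega> in M. Lp (\<lambda>r. W r \<omega>) q \<noteq> ereal (real_of_ereal (Lm (\<lambda>r. W r \<omega>) q))"
    using assms(1) by (intro AE_Lp_neq) simp_all
  then show ?thesis
  proof eventually_elim
    case (elim \<omega>)
    with Lp_lt_inf[of "\<lambda>r. W r \<omega>" q] Lm_gt_minf[OF assms, of "\<lambda>r. W r \<omega>"] show ?case
      by (cases "Lm (\<lambda>r. W r \<omega>) q") auto
  qed
qed

lemma measure_Gamma_minus_le_measure_interface:
  assumes "i + j = int (Suc n)"
  shows "measure M {\<omega> \<in> space M. (i, j) \<in> Gamma_minus x (\<lambda>q. W q \<omega>)}
    \<le> measure M {\<omega> \<in> space M. fst (comp_interface x (\<lambda>q. W q \<omega>) (Suc n)) \<le> i}"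
proof (rule finite_measure_mono_AE)
  show "{\<omega> \<in> space M. fst (comp_interface x (\<lambda>q. W q \<omega>) (Suc n)) \<le> i} \<in> sets M"
    by (rule sets_comp_interface_event[OF weights_measurable])
  show "AE \<omega> in M. \<omega> \<in> {\<omega> \<in> space M. (i, j) \<in> Gamma_minus x (\<lambda>q. W q \<omega>)}
      \<longrightarrow> \<omega> \<in> {\<omega> \<in> space M. fst (comp_interface x (\<lambda>q. W q \<omega>) (Suc n)) \<le> i}"
    using fst_comp_interface_le_if_Gamma_minus[OF _ assms] by simp
qed

lemma measure_interface_le_measure_Gamma_minus:
  assumes "1 \<le> i" "0 \<le> j" "i + j = int (Suc n)"
  shows "measure M {\<omega> \<in> space M. fst (comp_interface x (\<lambda>q. W q \<omega>) (Suc n)) < i}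
    \<le> measure M {\<omega> \<in> space M. (i, j) \<in> Gamma_minus x (\<lambda>q. W q \<omega>)}"
proof (rule finite_measure_mono_AE)
  show "{\<omega> \<in> space M. (i, j) \<in> Gamma_minus x (\<lambda>q. W q \<omega>)} \<in> sets M"
    by (rule sets_Gamma_minus_event[OF weights_measurable])
  have "AE \<omega> in M. Lp (\<lambda>q. W q \<omega>) (i, j) \<noteq> Lm (\<lambda>q. W q \<omega>) (i, j)"
    using assms(1,2) by (intro AE_Lp_neq_Lm) simp_all
  then show "AE \<omega> in M. \<omega> \<in> {\<omega> \<in> space M. fst (comp_interface x (\<lambda>q. W q \<omega>) (Suc n)) < i}
      \<longrightarrow> \<omega> \<in> {\<omega> \<in> space M. (i, j) \<in> Gamma_minus x (\<lambda>q. W q \<omega>)}"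
  proof eventually_elim
    case (elim \<omega>)
    with Lp_le_Lm_if_fst_comp_interface_less[OF _ assms(3), of "\<lambda>q. W q \<omega>"]
    show ?case by (auto simp: Gamma_minus_def)
  qed
qed

end

theorem proposition2p4:
  fixes M :: "'a measure" and W :: "pt \<Rightarrow> 'a \<Rightarrow> real"
    and x :: "int \<Rightarrow> int" and v :: "int \<Rightarrow> real" and n m :: nat
  assumes "prob_space M"
    and "prob_space.indep_vars M (\<lambda>_. borel) W UNIV"
    and "\<And>i j. distributed M lborel (W (i, j)) (\<lambda>t. ennreal (exponential_density (v j) t))"
    and "\<And>j. v j > 0"
    and "\<And>k. x (k + 1) < x k"
    and "x 0 = 1"
    and "x 1 < -1"
    and "m + 1 \<le> n"
  shows "measure M {\<omega> \<in> space M. (int m, int n - int m) \<in> Gamma_minus x (\<lambda>q. W q \<omega>)}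
           \<le> measure M {\<omega> \<in> space M.
                 fst (comp_interface x (\<lambda>q. W q \<omega>) n) - snd (comp_interface x (\<lambda>q. W q \<omega>) n)
                   \<le> - int n + 2 * int m}
       \<and> measure M {\<omega> \<in> space M.
                 fst (comp_interface x (\<lambda>q. W q \<omega>) n) - snd (comp_interface x (\<lambda>q. W q \<omega>) n)
                   \<le> - int n + 2 * int m}
           \<le> measure M {\<omega> \<in> space M. (int m + 1, int n - int m - 1) \<in> Gamma_minus x (\<lambda>q. W q \<omega>)}"
proof -
  have atomless: "emeasure M {\<omega> \<in> space M. W q \<omega> = c} = 0" for q c
    using distributed_lborel_atomless[OF assms(3)[of "fst q" "snd q"]] by simp
  have "staircase x"
    using assms(5-7) by unfold_locales
  with assms(1,2) atomless interpret staircase_lpp M x W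
    by (intro staircase_lpp.intro staircase_lpp_axioms.intro)
  obtain k where n: "n = Suc k" using assms(8) by (cases n) auto
  have "fst (comp_interface x w n) - snd (comp_interface x w n) \<le> - int n + 2 * int m
      \<longleftrightarrow> fst (comp_interface x w n) \<le> int m" for w
    using comp_interface_antidiagonal[of w n] by linarith
  moreover have "fst (comp_interface x w n) \<le> int m \<longleftrightarrow> fst (comp_interface x w n) < int m + 1" for w
    by linarith
  ultimately show ?thesis
    using measure_Gamma_minus_le_measure_interface[of "int m" "int n - int m" k]
      measure_interface_le_measure_Gamma_minus[of "int m + 1" "int n - int m - 1" k] assms(8)
    by (simp add: n)
qed

end
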